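(* Let $d \in \mathbb N$ and let $c_0, \ldots, c_{d-1}$ be positive reals. Let $m \in \mathbb Z^+ \cup \{\infty\}$, let $(s_j)_{j\in\mathbb N}$ be an increasing sequence of reals with $s_j\ge 1$, and let $(\ell_i)_{i\in\mathbb N}$ be an increasing sequence of positive integers. Let $$Z_d = \bigoplus_{i=0}^{d-1} c_i\mathbb Z,\qquad K_m = \bigoplus_{i \in \mathbb N} (m \times s)_i\, \mathbb Z_{\ell_i}.$$ Then $\operatorname{asdim}_{AN}(Z_d \times K_m) \geq d+m$ (which is $\infty$ if $m=\infty$).
   Context: A normed group is a group $G$ with a norm $\|\cdot\|$ ($\|g\|=0$ iff $g=1$, $\|g^{-1}\|=\|g\|$, $\|gh\|\le\|g\|+\|h\|$), regarded as a metric space via $d(g,h)=\|g^{-1}h\|$. $\mathbb Z$ has norm $|x|$ and $\mathbb Z_\ell$ has norm $\|x\|=\min(x,\ell-x)$ for $x\in\{0,\dots,\ell-1\}$. For normed groups $G_i$ and positive reals $s_i$, the scaled direct sum $\bigoplus_i s_iG_i$ is $\bigoplus_iG_i$ with norm $\|g\|_s=\sum_i s_i\|g_i\|_{G_i}$; the direct product of two normed groups carries the $\ell^1$ norm $\|(g,h)\|=\|g\|+\|h\|$. For $m\in\mathbb Z^+$ let $P_{(m,j)}=\{jm,jm+1,\dots,(j+1)m-1\}$ and for $m=\infty$ let $P_{(\infty,j)}=\{j^2,j^2+1,\dots,(j+1)^2-1\}$ ($j\in\mathbb N$); these partition $\mathbb N$. The $m$-inflation $m\times s$ of a sequence $s=(s_j)$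 is the sequence with $(m\times s)_i=s_j$ whenever $i\in P_{(m,j)}$. $\operatorname{asdim}_{AN}(X)\le n$ means there exist $C>0$, $r_0>0$ such that for every $r\ge r_0$ there is a cover of $X$ by sets of diameter at most $Cr$ with every $r$-ball meeting at most $n+1$ members; $\operatorname{asdim}_{AN}(X)$ is the least such $n$ (or $\infty$). *)

theory Defs
  imports Main "HOL-Library.Extended_Nat"
begin

definition asdim_AN_le :: "'a set \<Rightarrow> ('a \<Rightarrow> 'a \<Rightarrow> real) \<Rightarrow> nat \<Rightarrow> bool" where
  "asdim_AN_le X dst n \<longleftrightarrow>
     (\<exists>C>0. \<exists>r0>0. \<forall>r\<ge>r0. \<exists>\<U> :: 'a set set.
        (\<forall>V\<in>\<U>. V \<subseteq> X) \<and> \<Union>\<U> = X \<and>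
        (\<forall>V\<in>\<U>. \<forall>a\<in>V. \<forall>b\<in>V. dst a b \<le> C * r) \<and>
        (\<forall>x\<in>X. finite {V\<in>\<U>. V \<inter> {y\<in>X. dst x y \<le> r} \<noteq> {}} \<and>
                 card {V\<in>\<U>. V \<inter> {y\<in>X. dst x y \<le> r} \<noteq> {}} \<le> n + 1))"

definition asdim_AN :: "'a set \<Rightarrow> ('a \<Rightarrow> 'a \<Rightarrow> real) \<Rightarrow> enat" where
  "asdim_AN X dst =
     (if \<exists>n. asdim_AN_le X dst n then enat (LEAST n. asdim_AN_le X dst n) else \<infinity>)"

definition part :: "enat \<Rightarrow> nat \<Rightarrow> nat set" where
  "part m j = (case m of enat k \<Rightarrow> {j * k ..< (j + 1) * k}
                       | \<infinity> \<Rightarrow> {j\<^sup>2 ..< (j + 1)\<^sup>2})"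

definition inflate :: "enat \<Rightarrow> (nat \<Rightarrow> real) \<Rightarrow> nat \<Rightarrow> real" where
  "inflate m s i = s (THE j. i \<in> part m j)"

text \<open>Norm on Z_l: elements represented by 0..l-1.\<close>
definition zmod_norm :: "int \<Rightarrow> int \<Rightarrow> int" where
  "zmod_norm l x = min x (l - x)"

definition Zd_carrier :: "nat \<Rightarrow> (nat \<Rightarrow> int) set" where
  "Zd_carrier d = {x. \<forall>i\<ge>d. x i = 0}"

definition Km_carrier :: "(nat \<Rightarrow> nat) \<Rightarrow> (nat \<Rightarrow> int) set" where
  "Km_carrier l = {y. (\<forall>i. 0 \<le> y i \<and> y i < int (l i)) \<and> finite {i. y i \<noteq> 0}}"

definition Zd_norm :: "nat \<Rightarrow> (nat \<Rightarrow> real) \<Rightarrow> (nat \<Rightarrow> int) \<Rightarrow> real" where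
  "Zd_norm d c x = (\<Sum>i<d. c i * real_of_int \<bar>x i\<bar>)"

definition Km_norm :: "(nat \<Rightarrow> real) \<Rightarrow> (nat \<Rightarrow> nat) \<Rightarrow> (nat \<Rightarrow> int) \<Rightarrow> real" where
  "Km_norm w l y = (\<Sum>i\<in>{i. y i \<noteq> 0}. w i * real_of_int (zmod_norm (int (l i)) (y i)))"

definition ZK_diff :: "(nat \<Rightarrow> nat) \<Rightarrow> (nat \<Rightarrow> int) \<times> (nat \<Rightarrow> int) \<Rightarrow> (nat \<Rightarrow> int) \<times> (nat \<Rightarrow> int)
                        \<Rightarrow> (nat \<Rightarrow> int) \<times> (nat \<Rightarrow> int)" where
  "ZK_diff l g h = ((\<lambda>i. fst h i - fst g i), \<lambda>i. (snd h i - snd g i) mod int (l i))"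

definition ZK_carrier :: "nat \<Rightarrow> (nat \<Rightarrow> nat) \<Rightarrow> ((nat \<Rightarrow> int) \<times> (nat \<Rightarrow> int)) set" where
  "ZK_carrier d l = Zd_carrier d \<times> Km_carrier l"

text \<open>d(g,h) = ||g^{-1} h||, with the l^1 norm on the product.\<close>
definition ZK_dist :: "nat \<Rightarrow> (nat \<Rightarrow> real) \<Rightarrow> enat \<Rightarrow> (nat \<Rightarrow> real) \<Rightarrow> (nat \<Rightarrow> nat)
    \<Rightarrow> (nat \<Rightarrow> int) \<times> (nat \<Rightarrow> int) \<Rightarrow> (nat \<Rightarrow> int) \<times> (nat \<Rightarrow> int) \<Rightarrow> real" where
  "ZK_dist d c m s l g h =
     (let u = ZK_diff l g h in Zd_norm d c (fst u) + Km_norm (inflate m s) l (snd u))"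

end

theory Submission
  imports Defs "HOL-Analysis.Brouwer_Fixpoint"
begin

text \<open>
  This is a discrete form of the Lebesgue covering theorem. Put D = d + e, where e = m if m is
  finite and e is arbitrary otherwise. Far out in K_m there are blocks of e consecutive factors of
  equal weight whose orders l_i are huge, so that together with Z_d they contain, at every
  scale R, a copy of the grid {0..p}^D on which the metric is comparable to R times the
  l^1 metric. Given a cover with diameters at most C r and r-multiplicity at most n + 1, label
  each grid point by the first face {x_k = p} touched by its cover member. Members of diameter
  C r cannot reach across the cube, so this is a Sperner labelling; Kuhn's lemma yields a grid cell
  carrying all D + 1 labels, i.e. an r-ball meeting D + 1 members, whence n \<ge> D.
\<close>

lemma grid_cell_with_all_labels:
  fixes D p :: nat and lab :: "(nat \<Rightarrow> nat) \<Rightarrow> nat"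
  assumes p: "0 < p"
    and lab_le: "\<And>x. \<forall>j. x j \<le> p \<Longrightarrow> lab x \<le> D"
    and lab_top: "\<And>x j. \<forall>j. x j \<le> p \<Longrightarrow> j < D \<Longrightarrow> x j = p \<Longrightarrow> lab x \<le> j"
    and lab_bot: "\<And>x j. \<forall>j. x j \<le> p \<Longrightarrow> j < D \<Longrightarrow> x j = 0 \<Longrightarrow> lab x \<noteq> j"
  obtains b where
    "\<forall>k\<le>D. \<exists>x. (\<forall>j. x j \<le> p) \<and> (\<forall>j<D. b j \<le> x j \<and> x j \<le> Suc (b j)) \<and> lab x = k"
proof -
  text \<open>Kuhn's lemma is phrased for 0/1-valued labellings whose reduction recovers \<open>lab\<close>.\<close>
  define bin where "bin x j = (if j < lab x then 0 else if j = lab x then 1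
       else if x j = 0 then 0 else (1::nat))" for x j
  have reduced_bin: "reduced D (bin x) = lab x" if "\<forall>j. x j \<le> p" for x
    by (rule reduced_labelling_unique) (auto simp: bin_def lab_le[OF that])
  have "odd (card {s. ksimplex p D s \<and> (reduced D \<circ> bin) ` s = {..D}})"
  proof (rule kuhn_combinatorial[OF p])
    show "\<forall>x j. (\<forall>j. x j \<le> p) \<and> j < D \<and> x j = 0 \<longrightarrow> bin x j = 0"
      using lab_bot by (auto simp: bin_def)
    show "\<forall>x j. (\<forall>j. x j \<le> p) \<and> j < D \<and> x j = p \<longrightarrow> bin x j = 1"
    proof (intro allI impI)
      fix x j assume "(\<forall>j. x j \<le> p) \<and> j < D \<and> x j = p"
      moreover from this have "lab x \<le> j" using lab_top by blast
      ultimately show "bin x j = 1" using p by (auto simp: bin_def)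
    qed
  qed
  then have "{s. ksimplex p D s \<and> (reduced D \<circ> bin) ` s = {..D}} \<noteq> {}"
    by (rule odd_card_imp_not_empty)
  then obtain s b u where ks: "kuhn_simplex p D b u s" and full: "(reduced D \<circ> bin) ` s = {..D}"
    by (auto elim: ksimplex.cases)
  interpret kuhn_simplex p D b u s by (fact ks)
  show ?thesis
  proof (rule that[of b], intro allI impI)
    fix k assume "k \<le> D"
    then obtain x where x: "x \<in> s" "k = reduced D (bin x)" using full by force
    have xp: "\<forall>j. x j \<le> p" using s_le_p[OF x(1)] by auto
    moreover have "lab x = k" using x reduced_bin[OF xp] by simp
    ultimately show "\<exists>x. (\<forall>j. x j \<le> p) \<and> (\<forall>j<D. b j \<le> x j \<and> x j \<le> Suc (b j)) \<and> lab x = k"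
      using base_le[OF x(1)] le_Suc_base[OF x(1)] by blast
  qed
qed

definition AN_cover :: "'a set \<Rightarrow> ('a \<Rightarrow> 'a \<Rightarrow> real) \<Rightarrow> real \<Rightarrow> real \<Rightarrow> nat \<Rightarrow> 'a set set \<Rightarrow> bool" where
  "AN_cover X dst \<delta> r n U \<longleftrightarrow>
     (\<forall>V\<in>U. V \<subseteq> X) \<and> \<Union>U = X \<and> (\<forall>V\<in>U. \<forall>a\<in>V. \<forall>b\<in>V. dst a b \<le> \<delta>) \<and>
     (\<forall>x\<in>X. finite {V\<in>U. V \<inter> {y\<in>X. dst x y \<le> r} \<noteq> {}} \<and>
              card {V\<in>U. V \<inter> {y\<in>X. dst x y \<le> r} \<noteq> {}} \<le> n + 1)"

lemma asdim_AN_le_iff_AN_cover: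
  "asdim_AN_le X dst n \<longleftrightarrow> (\<exists>C>0. \<exists>r0>0. \<forall>r\<ge>r0. \<exists>U. AN_cover X dst (C * r) r n U)"
  by (simp add: asdim_AN_le_def AN_cover_def)

lemma AN_cover_multiplicity_ge_grid_dim:
  fixes \<phi> :: "(nat \<Rightarrow> nat) \<Rightarrow> 'a" and dst :: "'a \<Rightarrow> 'a \<Rightarrow> real"
  assumes p: "0 < p"
    and in_X: "\<And>x. \<forall>j. x j \<le> p \<Longrightarrow> \<phi> x \<in> X"
    and faces_far: "\<And>x y k. \<forall>j. x j \<le> p \<Longrightarrow> \<forall>j. y j \<le> p \<Longrightarrow> k < D \<Longrightarrow>
                      x k = 0 \<Longrightarrow> y k = p \<Longrightarrow> \<delta> < dst (\<phi> x) (\<phi> y)"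
    and cells_small: "\<And>x y. \<forall>j. x j \<le> p \<Longrightarrow> \<forall>j. y j \<le> p \<Longrightarrow>
                      \<forall>k<D. \<bar>real (y k) - real (x k)\<bar> \<le> 1 \<Longrightarrow> dst (\<phi> x) (\<phi> y) \<le> r"
    and U: "AN_cover X dst \<delta> r n U"
  shows "D \<le> n"
proof -
  define V where "V x = (SOME W. W \<in> U \<and> \<phi> x \<in> W)" for x
  have cover: "\<Union>U = X" and diam: "\<forall>V\<in>U. \<forall>a\<in>V. \<forall>b\<in>V. dst a b \<le> \<delta>"
    and mult: "\<forall>x\<in>X. finite {V\<in>U. V \<inter> {y\<in>X. dst x y \<le> r} \<noteq> {}} \<and>
                        card {V\<in>U. V \<inter> {y\<in>X. dst x y \<le> r} \<noteq> {}} \<le> n + 1"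
    using U unfolding AN_cover_def by blast+
  have V: "V x \<in> U \<and> \<phi> x \<in> V x" if "\<forall>j. x j \<le> p" for x
    using someI_ex[of "\<lambda>W. W \<in> U \<and> \<phi> x \<in> W"] in_X[OF that] cover
    unfolding V_def by blast
  define face where
    "face W = (LEAST k. k = D \<or> (\<exists>y. (\<forall>j. y j \<le> p) \<and> y k = p \<and> \<phi> y \<in> W))" for W
  have face_le: "face W \<le> D" for W
    unfolding face_def by (rule Least_le) simp
  have face_witness: "face W = D \<or> (\<exists>y. (\<forall>j. y j \<le> p) \<and> y (face W) = p \<and> \<phi> y \<in> W)" for W
    unfolding face_def by (rule LeastI_ex) blast
  obtain b where "\<forall>k\<le>D. \<exists>x. (\<forall>j. x j \<le> p) \<and> (\<forall>j<D. b j \<le> x j \<and> x j \<le> Suc (b j))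
                                   \<and> face (V x) = k"
  proof (rule grid_cell_with_all_labels[OF p, of "\<lambda>x. face (V x)" D])
    show "face (V x) \<le> j" if "\<forall>j. x j \<le> p" "j < D" "x j = p" for x j
      unfolding face_def using V that by (intro Least_le) blast
    show "face (V x) \<noteq> j" if x: "\<forall>j. x j \<le> p" "j < D" "x j = 0" for x j
    proof
      assume "face (V x) = j"
      then obtain y where y: "\<forall>j. y j \<le> p" "y j = p" "\<phi> y \<in> V x"
        using face_witness[of "V x"] x(2) by auto
      have "\<delta> < dst (\<phi> x) (\<phi> y)" using faces_far[OF x(1) y(1) x(2,3) y(2)] .
      moreover have "dst (\<phi> x) (\<phi> y) \<le> \<delta>" using diam V[OF x(1)] y(3) by blast
      ultimately show False by simp
    qed
  qed (use face_le in blast)+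
  then obtain w where w: "\<And>k. k \<le> D \<Longrightarrow> (\<forall>j. w k j \<le> p) \<and>
      (\<forall>j<D. b j \<le> w k j \<and> w k j \<le> Suc (b j)) \<and> face (V (w k)) = k"
    by metis
  define F where "F = (\<lambda>k. V (w k)) ` {..D}"
  let ?S = "{W\<in>U. W \<inter> {y\<in>X. dst (\<phi> (w 0)) y \<le> r} \<noteq> {}}"
  have "F \<subseteq> ?S"
  proof
    fix W assume "W \<in> F"
    then obtain k where k: "k \<le> D" "W = V (w k)" unfolding F_def by blast
    have "\<forall>j<D. \<bar>real (w k j) - real (w 0 j)\<bar> \<le> 1" using w[OF k(1)] w[of 0] by fastforce
    then have "dst (\<phi> (w 0)) (\<phi> (w k)) \<le> r" using cells_small w[OF k(1)] w[of 0] by blast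
    then show "W \<in> ?S" using V in_X w[OF k(1)] k(2) by blast
  qed
  moreover have "finite ?S" "card ?S \<le> n + 1" using mult in_X w[of 0] by blast+
  ultimately have "card F \<le> n + 1" by (meson card_mono order_trans)
  moreover have "inj_on (\<lambda>k. V (w k)) {..D}"
    by (rule inj_onI) (metis atMost_iff w)
  then have "card F = D + 1" unfolding F_def by (simp add: card_image)
  ultimately show "D \<le> n" by simp
qed

lemma zmod_norm_mod_small:
  fixes L z :: int
  assumes "0 < L" "2 * \<bar>z\<bar> < L"
  shows "zmod_norm L (z mod L) = \<bar>z\<bar>"
proof (cases "z \<ge> 0")
  case True
  then show ?thesis using assms by (simp add: mod_pos_pos_trivial zmod_norm_def)
next
  case False
  have "z mod L = (z + L) mod L" by simp
  also have "\<dots> = z + L" using assms False by (intro mod_pos_pos_trivial) auto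
  finally show ?thesis using False assms by (simp add: zmod_norm_def)
qed

lemma part_unique:
  assumes "m \<noteq> 0" "i \<in> part m j" "i \<in> part m j'"
  shows "j = j'"
proof -
  have disjoint: "i \<notin> part m j \<inter> part m j'" if "j < j'" for j j'
  proof (cases m)
    case (enat k)
    have "(j + 1) * k \<le> j' * k" using that by (intro mult_le_mono1) simp
    then show ?thesis using enat by (auto simp: Defs.part_def)
  next
    case infinity
    have "(j + 1)\<^sup>2 \<le> j'\<^sup>2" using that by (simp add: power_mono)
    then show ?thesis using infinity by (auto simp: Defs.part_def)
  qed
  show ?thesis using assms(2,3) disjoint[of j j'] disjoint[of j' j] by (metis IntI linorder_neqE)
qed

lemma inflate_eq_on_part:
  assumes "m \<noteq> 0" "i \<in> part m j"
  shows "inflate m s i = s j"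
  using assms part_unique unfolding inflate_def by (metis theI)

lemma inflate_constant_on_far_blocks:
  assumes "m \<noteq> 0" "enat e \<le> m"
  shows "\<exists>j b0. j0 \<le> b0 \<and> (\<forall>i\<in>{b0..<b0 + e}. inflate m s i = s j)"
proof (cases m)
  case (enat k)
  then have "0 < k" "e \<le> k" using assms by (auto simp: zero_enat_def)
  then have "j0 \<le> j0 * k" "\<forall>i\<in>{j0 * k..<j0 * k + e}. i \<in> part m j0"
    using enat by (auto simp: Defs.part_def algebra_simps)
  then show ?thesis using inflate_eq_on_part[OF assms(1)] by blast
next
  case infinity
  define j where "j = j0 + e"
  have "j0 \<le> j" "j \<le> j\<^sup>2" "j\<^sup>2 + e \<le> (j + 1)\<^sup>2"
    unfolding j_def by (simp_all add: power2_eq_square)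
  then have "j0 \<le> j\<^sup>2" "\<forall>i\<in>{j\<^sup>2..<j\<^sup>2 + e}. i \<in> part m j"
    using infinity by (auto simp: Defs.part_def)
  then show ?thesis using inflate_eq_on_part[OF assms(1)] by blast
qed

definition cube_embedding ::
    "nat \<Rightarrow> nat \<Rightarrow> nat \<Rightarrow> (nat \<Rightarrow> nat) \<Rightarrow> (nat \<Rightarrow> nat) \<Rightarrow> (nat \<Rightarrow> int) \<times> (nat \<Rightarrow> int)" where
  "cube_embedding d e h t x =
     ((\<lambda>i. if i < d then int (t i * x i) else 0),
      (\<lambda>i. if d + h \<le> i \<and> i < d + e + h then int (t (i - h) * x (i - h)) else 0))"

lemma cube_embedding_in_ZK_carrier:
  assumes l_pos: "\<forall>i. l i > 0"
    and small: "\<forall>k\<in>{d..<d + e}. t k * p < l (k + h)"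
    and x: "\<forall>j. x j \<le> p"
  shows "cube_embedding d e h t x \<in> ZK_carrier d l"
proof -
  have bound: "t k * x k < l (k + h)" if "k \<in> {d..<d + e}" for k
    using small that x by (meson le_less_trans mult_le_mono2)
  have "int (t (i - h) * x (i - h)) < int (l i)" if "d + h \<le> i" "i < d + e + h" for i
  proof -
    have "i - h \<in> {d..<d + e}" "i - h + h = i" using that by auto
    then have "t (i - h) * x (i - h) < l i" using bound[of "i - h"] by simp
    then show ?thesis by (simp only: of_nat_less_iff)
  qed
  moreover have "finite {i. snd (cube_embedding d e h t x) i \<noteq> 0}"
    by (rule finite_subset[of _ "{d + h..<d + e + h}"]) (auto simp: cube_embedding_def)
  ultimately show ?thesis
    using l_pos by (auto simp: cube_embedding_def ZK_carrier_def Zd_carrier_def Km_carrier_def)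
qed

lemma ZK_dist_cube_embedding:
  assumes infl: "\<forall>k\<in>{d..<d + e}. inflate m s (k + h) = \<sigma>"
    and small: "\<forall>k\<in>{d..<d + e}. 2 * t k * p < l (k + h)"
    and x: "\<forall>j. x j \<le> p" and y: "\<forall>j. y j \<le> p"
  shows "ZK_dist d c m s l (cube_embedding d e h t x) (cube_embedding d e h t y) =
           (\<Sum>k<d + e. (if k < d then c k else \<sigma>) * t k * \<bar>real (y k) - real (x k)\<bar>)"
proof -
  define u where "u = ZK_diff l (cube_embedding d e h t x) (cube_embedding d e h t y)"
  have scaled_diff: "real_of_int \<bar>int (t k * y k) - int (t k * x k)\<bar> =
                       real (t k) * \<bar>real (y k) - real (x k)\<bar>" for k
    by (simp add: abs_mult flip: right_diff_distrib)
  have "Zd_norm d c (fst u) = (\<Sum>k<d. c k * t k * \<bar>real (y k) - real (x k)\<bar>)"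
    unfolding Zd_norm_def
    by (intro sum.cong refl) (simp add: u_def ZK_diff_def cube_embedding_def flip: scaled_diff)
  moreover have "Km_norm (inflate m s) l (snd u) =
                   (\<Sum>k\<in>{d..<d + e}. \<sigma> * t k * \<bar>real (y k) - real (x k)\<bar>)"
  proof -
    have snd_u: "snd u (k + h) = (int (t k * y k) - int (t k * x k)) mod int (l (k + h))"
      if "k \<in> {d..<d + e}" for k
      using that by (auto simp: u_def ZK_diff_def cube_embedding_def)
    have norm_u: "zmod_norm (int (l (k + h))) (snd u (k + h)) = \<bar>int (t k * y k) - int (t k * x k)\<bar>"
      if k: "k \<in> {d..<d + e}" for k
    proof -
      have "int (t k * y k) \<le> int (t k * p)" "int (t k * x k) \<le> int (t k * p)"
        using x y by (simp_all only: of_nat_le_iff mult_le_mono2)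
      moreover have "2 * int (t k * p) < int (l (k + h))"
        using small k of_nat_less_iff[of "2 * (t k * p)" "l (k + h)"] by (simp add: mult.assoc)
      ultimately have diff_small: "2 * \<bar>int (t k * y k) - int (t k * x k)\<bar> < int (l (k + h))"
        by (smt (verit) of_nat_0_le_iff)
      moreover have "0 < int (l (k + h))"
        using diff_small by (smt (verit) abs_ge_zero)
      ultimately show ?thesis unfolding snd_u[OF k] by (simp only: zmod_norm_mod_small)
    qed
    have "Km_norm (inflate m s) l (snd u) =
            (\<Sum>i\<in>{d + h..<d + e + h}. inflate m s i * zmod_norm (int (l i)) (snd u i))"
      unfolding Km_norm_def
      by (intro sum.mono_neutral_left) (auto simp: u_def ZK_diff_def cube_embedding_def zmod_norm_def)
    also have "\<dots> = (\<Sum>k\<in>{d..<d + e}. inflate m s (k + h) * zmod_norm (int (l (k + h))) (snd u (k + h)))"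
      by (rule sum.shift_bounds_nat_ivl)
    also have "\<dots> = (\<Sum>k\<in>{d..<d + e}. \<sigma> * t k * \<bar>real (y k) - real (x k)\<bar>)"
      using infl norm_u scaled_diff by (intro sum.cong refl) (simp add: mult.assoc)
    finally show ?thesis .
  qed
  ultimately have "ZK_dist d c m s l (cube_embedding d e h t x) (cube_embedding d e h t y) =
      (\<Sum>k<d. c k * t k * \<bar>real (y k) - real (x k)\<bar>) +
      (\<Sum>k\<in>{d..<d + e}. \<sigma> * t k * \<bar>real (y k) - real (x k)\<bar>)"
    unfolding ZK_dist_def Let_def u_def by simp
  also have "\<dots> = (\<Sum>k<d + e. (if k < d then c k else \<sigma>) * t k * \<bar>real (y k) - real (x k)\<bar>)"
    by (simp add: lessThan_atLeast0 flip: sum.atLeastLessThan_concat[of 0 d "d + e"])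
  finally show ?thesis .
qed

lemma nat_ceiling_divide_bounds:
  fixes w S :: real
  assumes "0 < w" "0 \<le> S"
  shows "S \<le> w * nat \<lceil>S / w\<rceil>" "w * nat \<lceil>S / w\<rceil> \<le> S + w"
proof -
  have "S / w \<le> nat \<lceil>S / w\<rceil>" "nat \<lceil>S / w\<rceil> \<le> S / w + 1"
    using assms by (simp_all add: divide_nonneg_nonneg)
  then have "w * (S / w) \<le> w * nat \<lceil>S / w\<rceil>" "w * nat \<lceil>S / w\<rceil> \<le> w * (S / w + 1)"
    using assms(1) by (simp_all only: mult_le_cancel_left_pos)
  then show "S \<le> w * nat \<lceil>S / w\<rceil>" "w * nat \<lceil>S / w\<rceil> \<le> S + w"
    using assms(1) by (simp_all add: distrib_left)
qed

lemma ZK_contains_scaled_grids: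
  fixes d e h p R :: nat and \<sigma> :: real
  assumes c_pos: "\<forall>i<d. 0 < c i" and l_pos: "\<forall>i. 0 < l i" and \<sigma>: "0 \<le> \<sigma>"
    and infl: "\<forall>k\<in>{d..<d + e}. inflate m s (k + h) = \<sigma>"
    and small: "\<forall>k\<in>{d..<d + e}. 2 * R * p < l (k + h)"
  obtains \<phi> :: "(nat \<Rightarrow> nat) \<Rightarrow> (nat \<Rightarrow> int) \<times> (nat \<Rightarrow> int)" where
    "\<And>x. \<forall>j. x j \<le> p \<Longrightarrow> \<phi> x \<in> ZK_carrier d l"
    "\<And>x y k. \<forall>j. x j \<le> p \<Longrightarrow> \<forall>j. y j \<le> p \<Longrightarrow> k < d + e \<Longrightarrow>
       real R * \<sigma> * \<bar>real (y k) - real (x k)\<bar> \<le> ZK_dist d c m s l (\<phi> x) (\<phi> y)"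
    "\<And>x y. \<forall>j. x j \<le> p \<Longrightarrow> \<forall>j. y j \<le> p \<Longrightarrow> \<forall>k<d + e. \<bar>real (y k) - real (x k)\<bar> \<le> 1 \<Longrightarrow>
       ZK_dist d c m s l (\<phi> x) (\<phi> y) \<le> real (d + e) * R * \<sigma> + (\<Sum>k<d. c k) + real e * \<sigma>"
proof -
  define w where "w k = (if k < d then c k else \<sigma>)" for k
  text \<open>Scale each direction so that its weight becomes R \<sigma>, up to an error of one step.\<close>
  define t where "t k = (if k < d then nat \<lceil>real R * \<sigma> / c k\<rceil> else R)" for k
  have wt: "real R * \<sigma> \<le> w k * t k" "w k * t k \<le> real R * \<sigma> + w k" for k
    using nat_ceiling_divide_bounds[of "c k" "real R * \<sigma>"] c_pos \<sigma> by (auto simp: w_def t_def)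
  have small_t: "\<forall>k\<in>{d..<d + e}. 2 * t k * p < l (k + h)"
    using small by (simp add: t_def)
  have dist: "ZK_dist d c m s l (cube_embedding d e h t x) (cube_embedding d e h t y) =
                (\<Sum>k<d + e. w k * t k * \<bar>real (y k) - real (x k)\<bar>)"
    if "\<forall>j. x j \<le> p" "\<forall>j. y j \<le> p" for x y
    unfolding w_def by (rule ZK_dist_cube_embedding[OF infl small_t that])
  have wt_nonneg: "0 \<le> w k * t k" for k
    using wt(1)[of k] \<sigma> by (smt (verit) mult_nonneg_nonneg of_nat_0_le_iff)
  then have terms_nonneg: "0 \<le> w k * t k * \<bar>real (y k) - real (x k)\<bar>" for k x y
    by simp
  show ?thesis
  proof
    show "cube_embedding d e h t x \<in> ZK_carrier d l" if "\<forall>j. x j \<le> p" for x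
      using small_t that by (intro cube_embedding_in_ZK_carrier[OF l_pos]) auto
  next
    fix x y :: "nat \<Rightarrow> nat" and k assume xy: "\<forall>j. x j \<le> p" "\<forall>j. y j \<le> p" and k: "k < d + e"
    have "real R * \<sigma> * \<bar>real (y k) - real (x k)\<bar> \<le> w k * t k * \<bar>real (y k) - real (x k)\<bar>"
      using wt(1) by (rule mult_right_mono) simp
    also have "\<dots> \<le> (\<Sum>k<d + e. w k * t k * \<bar>real (y k) - real (x k)\<bar>)"
      using k terms_nonneg by (intro member_le_sum) auto
    finally show "real R * \<sigma> * \<bar>real (y k) - real (x k)\<bar> \<le>
        ZK_dist d c m s l (cube_embedding d e h t x) (cube_embedding d e h t y)"
      using dist[OF xy] by simp
  next
    fix x y :: "nat \<Rightarrow> nat" assume xy: "\<forall>j. x j \<le> p" "\<forall>j. y j \<le> p"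
      and adjacent: "\<forall>k<d + e. \<bar>real (y k) - real (x k)\<bar> \<le> 1"
    have "(\<Sum>k<d + e. w k * t k * \<bar>real (y k) - real (x k)\<bar>) \<le> (\<Sum>k<d + e. real R * \<sigma> + w k)"
    proof (rule sum_mono)
      fix k assume "k \<in> {..<d + e}"
      then have "w k * t k * \<bar>real (y k) - real (x k)\<bar> \<le> w k * t k"
        using adjacent wt_nonneg[of k] by (intro mult_left_le) auto
      then show "w k * t k * \<bar>real (y k) - real (x k)\<bar> \<le> real R * \<sigma> + w k"
        using wt(2)[of k] by linarith
    qed
    also have "\<dots> = real (d + e) * R * \<sigma> + (\<Sum>k<d. c k) + real e * \<sigma>"
      by (simp add: sum.distrib w_def lessThan_atLeast0
          flip: sum.atLeastLessThan_concat[of 0 d "d + e"])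
    finally show "ZK_dist d c m s l (cube_embedding d e h t x) (cube_embedding d e h t y) \<le>
        real (d + e) * R * \<sigma> + (\<Sum>k<d. c k) + real e * \<sigma>"
      using dist[OF xy] by simp
  qed
qed

lemma ZK_asdim_AN_le_imp_le:
  fixes d e n :: nat
  assumes c_pos: "\<forall>i<d. 0 < c i" and s_ge1: "\<forall>j. 1 \<le> s j"
    and l_mono: "strict_mono l" and l_pos: "\<forall>i. 0 < l i"
    and blocks: "\<And>j0. \<exists>j b0. j0 \<le> b0 \<and> (\<forall>i\<in>{b0..<b0 + e}. inflate m s i = s j)"
    and asdim: "asdim_AN_le (ZK_carrier d l) (ZK_dist d c m s l) n"
  shows "d + e \<le> n"
proof (rule ccontr)
  assume "\<not> d + e \<le> n"
  then have De: "1 \<le> real (d + e)" by simp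
  obtain C r0 where C: "0 < C" and covers: "\<And>r. r0 \<le> r \<Longrightarrow>
      \<exists>U. AN_cover (ZK_carrier d l) (ZK_dist d c m s l) (C * r) r n U"
    using asdim unfolding asdim_AN_le_iff_AN_cover by blast
  define M where "M = (\<Sum>k<d. c k)"
  have M: "0 \<le> M" unfolding M_def using c_pos by (intro sum_nonneg) auto
  define R where "R = nat \<lceil>r0\<rceil> + 1"
  have R: "r0 \<le> R" "1 \<le> R" unfolding R_def by linarith+
  define p where "p = nat \<lceil>C * (2 * (d + e) + M)\<rceil> + 1"
  have p: "C * (2 * (d + e) + M) < p" "0 < p" unfolding p_def using C M by linarith+
  obtain j b0 where b0: "2 * R * p + d + 1 \<le> b0" and block: "\<forall>i\<in>{b0..<b0 + e}. inflate m s i = s j"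
    using blocks by blast
  define \<sigma> where "\<sigma> = s j"
  have \<sigma>: "1 \<le> \<sigma>" unfolding \<sigma>_def using s_ge1 by simp
  define h where "h = b0 - d"
  have shifted: "k + h \<in> {b0..<b0 + e}" if "k \<in> {d..<d + e}" for k
    using b0 that unfolding h_def by auto
  then have infl: "\<forall>k\<in>{d..<d + e}. inflate m s (k + h) = \<sigma>"
    using block unfolding \<sigma>_def by blast
  have small: "\<forall>k\<in>{d..<d + e}. 2 * R * p < l (k + h)"
  proof
    fix k assume "k \<in> {d..<d + e}"
    then have "b0 \<le> k + h" using shifted by simp
    moreover have "k + h \<le> l (k + h)" by (rule strict_mono_imp_increasing[OF l_mono])
    ultimately show "2 * R * p < l (k + h)" using b0 by linarith
  qed
  obtain \<phi> where in_X: "\<And>x. \<forall>j. x j \<le> p \<Longrightarrow> \<phi> x \<in> ZK_carrier d l"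
    and lower: "\<And>x y k. \<forall>j. x j \<le> p \<Longrightarrow> \<forall>j. y j \<le> p \<Longrightarrow> k < d + e \<Longrightarrow>
       real R * \<sigma> * \<bar>real (y k) - real (x k)\<bar> \<le> ZK_dist d c m s l (\<phi> x) (\<phi> y)"
    and upper: "\<And>x y. \<forall>j. x j \<le> p \<Longrightarrow> \<forall>j. y j \<le> p \<Longrightarrow> \<forall>k<d + e. \<bar>real (y k) - real (x k)\<bar> \<le> 1 \<Longrightarrow>
       ZK_dist d c m s l (\<phi> x) (\<phi> y) \<le> real (d + e) * R * \<sigma> + M + real e * \<sigma>"
    unfolding M_def by (rule ZK_contains_scaled_grids[OF c_pos l_pos _ infl small]) (use \<sigma> in auto)
  define S where "S = real R * \<sigma>"
  have "real R \<le> S" unfolding S_def using mult_left_mono[of 1 \<sigma> "real R"] \<sigma> by simp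
  moreover have "\<sigma> \<le> S" unfolding S_def using mult_right_mono[of 1 "real R" \<sigma>] R(2) \<sigma> by simp
  ultimately have S: "r0 \<le> S" "\<sigma> \<le> S" "1 \<le> S" using R(1) \<sigma> by linarith+
  define r where "r = real (d + e) * S + M + real e * \<sigma>"
  have "S \<le> real (d + e) * S" using De S(3) by simp
  moreover have "0 \<le> real e * \<sigma>" using \<sigma> by simp
  ultimately have "r0 \<le> r" unfolding r_def using S(1) M by linarith
  then obtain U where U: "AN_cover (ZK_carrier d l) (ZK_dist d c m s l) (C * r) r n U"
    using covers by blast
  text \<open>The diameter bound C r is dwarfed by the side S p of the embedded cube.\<close>
  have "real e * \<sigma> \<le> real (d + e) * S" using S(2) \<sigma> by (intro mult_mono) simp_all
  moreover have "M \<le> M * S" using M S(3) by (simp add: mult_le_cancel_left1)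
  ultimately have "r \<le> (2 * (d + e) + M) * S" unfolding r_def by (simp add: algebra_simps)
  then have "C * r \<le> C * (2 * (d + e) + M) * S" using C by (simp add: mult.assoc)
  also have "\<dots> < p * S" using p(1) S(3) by simp
  finally have Cr: "C * r < S * p" by (simp add: mult.commute)
  have "d + e \<le> n"
  proof (rule AN_cover_multiplicity_ge_grid_dim[OF p(2) in_X _ _ U])
    fix x y :: "nat \<Rightarrow> nat" and k
    assume "\<forall>j. x j \<le> p" "\<forall>j. y j \<le> p" "k < d + e" "x k = 0" "y k = p"
    then show "C * r < ZK_dist d c m s l (\<phi> x) (\<phi> y)"
      using lower[of x y k] Cr unfolding S_def by simp
  next
    fix x y :: "nat \<Rightarrow> nat"
    assume "\<forall>j. x j \<le> p" "\<forall>j. y j \<le> p" "\<forall>k<d + e. \<bar>real (y k) - real (x k)\<bar> \<le> 1"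
    then show "ZK_dist d c m s l (\<phi> x) (\<phi> y) \<le> r"
      using upper[of x y] unfolding r_def S_def by (simp add: mult.assoc)
  qed
  then show False using \<open>\<not> d + e \<le> n\<close> by simp
qed

theorem lemma1p2:
  fixes d :: nat and c :: "nat \<Rightarrow> real" and m :: enat
    and s :: "nat \<Rightarrow> real" and l :: "nat \<Rightarrow> nat"
  assumes c_pos: "\<forall>i<d. c i > 0"
    and m_pos: "m \<noteq> 0"
    and s_mono: "mono s" and s_ge1: "\<forall>j. s j \<ge> 1"
    and l_mono: "strict_mono l" and l_pos: "\<forall>i. l i > 0"
  shows "asdim_AN (ZK_carrier d l) (ZK_dist d c m s l) \<ge> enat d + m"
proof -
  let ?P = "asdim_AN_le (ZK_carrier d l) (ZK_dist d c m s l)"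
  have bound: "enat d + m \<le> enat n" if "?P n" for n
  proof (cases m)
    case (enat k)
    have "d + k \<le> n"
      by (rule ZK_asdim_AN_le_imp_le[OF c_pos s_ge1 l_mono l_pos _ that])
        (use inflate_constant_on_far_blocks[OF m_pos] enat in simp)
    then show ?thesis using enat by simp
  next
    case infinity
    have "d + (n + 1) \<le> n"
      by (rule ZK_asdim_AN_le_imp_le[OF c_pos s_ge1 l_mono l_pos _ that])
        (use inflate_constant_on_far_blocks[OF m_pos, of "n + 1"] infinity in auto)
    then show ?thesis by simp
  qed
  show ?thesis
  proof (cases "\<exists>n. ?P n")
    case True
    then show ?thesis using bound[OF LeastI_ex[OF True]] by (simp add: asdim_AN_def)
  qed (simp add: asdim_AN_def)
qed

end
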